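(* Assume $\rho_1=1$ and $\rho_{1,2}=\lambda^2\int_0^\infty x^2\,dB_1(x)<\infty$. Then for every fixed integer $j\ge0$, $$e_{L-j}-e_{L-j-1}=\frac{2}{\rho_{1,2}}+o(1)\qquad\text{as }L\to\infty.$$
   Context: $B_1$ is a probability distribution function on $[0,\infty)$ with positive finite mean, $\lambda>0$, $\rho_1=\lambda\int_0^\infty x\,dB_1(x)$. Let $r_j=\int_0^\infty e^{-\lambda x}\frac{(\lambda x)^j}{j!}\,dB_1(x)$, $j\ge0$, and define $(e_n)_{n\ge0}$ by $e_0=1$ and $e_n=\sum_{j=0}^n e_{n-j+1}r_j$ for $n\ge0$ ($e_n$ is the expected number of customers served during a busy period of the M/GI/1/$n$ queue with arrival rate $\lambda$ and service distribution $B_1$). *)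

theory Defs
  imports "HOL-Probability.Probability"
begin

text \<open>Service distribution B_1 is modelled as a probability measure M on the Borel reals,
  concentrated on [0,\<infinity>).\<close>

definition rj :: "real measure \<Rightarrow> real \<Rightarrow> nat \<Rightarrow> real" where
  "rj M lam j = (\<integral>x. exp (- lam * x) * (lam * x) ^ j / fact j \<partial>M)"

definition rho1 :: "real measure \<Rightarrow> real \<Rightarrow> real" where
  "rho1 M lam = lam * (\<integral>x. x \<partial>M)"

definition rho12 :: "real measure \<Rightarrow> real \<Rightarrow> real" where
  "rho12 M lam = lam ^ 2 * (\<integral>x. x ^ 2 \<partial>M)"

end

theory Submission
  imports Defs "HOL-Computational_Algebra.Formal_Power_Series"
begin

(* Writing d n = e n - e (n - 1), the busy-period recursion becomes the discrete renewal
  equation d = r + t * d (convolution), where t k = 1 - (r 0 + ... + r k) is the tail of the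
  mixed Poisson distribution r. Because rho1 = 1, t is itself a probability distribution, its
  mean is rho12 / 2, and t 1 > 0 makes it aperiodic; so d n tends to 2 / rho12 by the renewal
  theorem. The latter is proved in the manner of Erdos, Feller and Pollard: along a subsequence
  realising the limsup (or, applied to -d, the liminf) of d, the renewal equation together
  with t 1 > 0 forces every shifted subsequence d (m i - j) to the same limit L, and letting
  n tend to infinity in the identity
    sum k<=n. tail t k * d (n - k) = r 0 + ... + r n
  gives L * rho12 / 2 = 1. *)

section \<open>Tails of distributions on the naturals\<close>

definition tail :: "(nat \<Rightarrow> real) \<Rightarrow> nat \<Rightarrow> real" where
  "tail p k = 1 - (\<Sum>j\<le>k. p j)"

lemma tail_nonneg:
  assumes "\<And>j. 0 \<le> p j" and "p sums 1"
  shows "0 \<le> tail p k"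
  using sum_le_suminf[OF sums_summable[OF assms(2)], of "{..k}"] assms
  by (auto simp: tail_def sums_unique[symmetric])

lemma tail_0_pos:
  assumes "\<And>j. 0 \<le> p j" and "p sums 1" and "0 < p 1"
  shows "0 < tail p 0"
proof -
  have "p 0 + p 1 \<le> 1"
    using sum_le_suminf[OF sums_summable[OF assms(2)], of "{0, 1}"] assms(1)
    by (simp add: sums_unique[OF assms(2), symmetric])
  with \<open>0 < p 1\<close> show ?thesis
    by (simp add: tail_def)
qed

lemma sums_weighted_tail:
  fixes p c :: "nat \<Rightarrow> real"
  assumes p: "\<And>j. 0 \<le> p j" "p sums 1" and c: "\<And>k. 0 \<le> c k"
    and S: "(\<lambda>j. (\<Sum>k<j. c k) * p j) sums S"
  shows "(\<lambda>k. c k * tail p k) sums S"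
proof -
  define C where "C j = (\<Sum>k<j. c k)" for j
  define R where "R n = C n * (1 - (\<Sum>j<n. p j))" for n
  (* Abel summation; since C is nondecreasing, the remainder R n is dominated by the tail of the
    series for S. *)
  have by_parts: "(\<Sum>k<n. c k * tail p k) = (\<Sum>j<n. C j * p j) + R n" for n
    by (induction n) (simp_all add: C_def R_def tail_def lessThan_Suc_atMost[symmetric] algebra_simps)
  have sp: "summable p" and sCp: "summable (\<lambda>j. C j * p j)"
    using p S by (auto simp: C_def intro: sums_summable)
  have upper: "R n \<le> (\<Sum>i. C (i + n) * p (i + n))" for n
  proof -
    have "R n = (\<Sum>i. C n * p (i + n))"
      using suminf_minus_initial_segment[OF sp, of n] sums_unique[OF p(2)] sp
      by (simp add: R_def suminf_mult)
    also have "\<dots> \<le> (\<Sum>i. C (i + n) * p (i + n))"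
    proof (rule suminf_le)
      show "C n * p (i + n) \<le> C (i + n) * p (i + n)" for i
        using p(1) c by (auto simp: C_def intro!: mult_right_mono sum_mono2)
      show "summable (\<lambda>i. C n * p (i + n))"
        using sp by (intro summable_mult) simp
      show "summable (\<lambda>i. C (i + n) * p (i + n))"
        using sCp summable_iff_shift[of "\<lambda>j. C j * p j" n] by simp
    qed
    finally show ?thesis .
  qed
  have lower: "0 \<le> R n" for n
    using sum_le_suminf[OF sp, of "{..<n}"] sums_unique[OF p(2)] p(1) c
    by (auto simp: R_def C_def intro!: mult_nonneg_nonneg sum_nonneg)
  have "R \<longlonglongrightarrow> 0"
    by (rule tendsto_sandwich[OF _ _ tendsto_const suminf_exist_split2[OF sCp]])
       (use lower upper in auto)
  with S show ?thesis
    unfolding sums_def by_parts C_def[symmetric] by (intro tendsto_add[where b = 0, simplified])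
qed

lemma sum_lessThan_choose: "(\<Sum>k<j. real (k choose m)) = real (j choose Suc m)"
  by (cases j) (simp_all add: lessThan_Suc_atMost sum_choose_upper flip: of_nat_sum)

lemma binomial_moment_tail:
  fixes p :: "nat \<Rightarrow> real"
  assumes "\<And>j. 0 \<le> p j" and "p sums 1"
    and "(\<lambda>j. real (j choose Suc m) * p j) sums s"
  shows "(\<lambda>k. real (k choose m) * tail p k) sums s"
  using assms by (intro sums_weighted_tail) (simp_all add: sum_lessThan_choose)

lemma tail_sums_mean:
  fixes p :: "nat \<Rightarrow> real"
  assumes "\<And>j. 0 \<le> p j" and "p sums 1" and "(\<lambda>j. real j * p j) sums \<mu>"
  shows "tail p sums \<mu>"
  using binomial_moment_tail[of p 0 \<mu>] assms by simp

lemma tail_1_pos: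
  fixes p :: "nat \<Rightarrow> real"
  assumes p: "\<And>j. 0 \<le> p j" "p sums 1" and mean: "(\<lambda>j. real j * p j) sums 1" and "0 < p 0"
  shows "0 < tail p 1"
proof (rule ccontr)
  assume "\<not> 0 < tail p 1"
  have "tail p k = 0" if "1 \<le> k" for k
  proof -
    have "tail p k \<le> tail p 1"
      using that p(1) sum_mono2[of "{..k}" "{..1}" p] by (simp add: tail_def)
    with \<open>\<not> 0 < tail p 1\<close> tail_nonneg[OF p, of k] show ?thesis
      by linarith
  qed
  then have "tail p sums (\<Sum>k\<in>{0}. tail p k)"
    by (intro sums_finite) auto
  with tail_sums_mean[OF p mean] have "tail p 0 = 1"
    using sums_unique2 by simp
  with \<open>0 < p 0\<close> show False
    by (simp add: tail_def)
qed

lemma fps_tail: "(1 - fps_X) * Abs_fps (tail p) = 1 - Abs_fps p"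
proof (rule fps_ext)
  show "fps_nth ((1 - fps_X) * Abs_fps (tail p)) n = fps_nth (1 - Abs_fps p) n" for n
    by (cases n) (simp_all add: tail_def algebra_simps)
qed

lemma fps_nth_mult_Abs_fps: "fps_nth (Abs_fps a * Abs_fps b) n = (\<Sum>k\<le>n. a k * b (n - k))"
  by (simp add: fps_mult_nth atLeast0AtMost)

lemma tail_convolution_eq_partial_sums:
  fixes d r t :: "nat \<Rightarrow> real"
  assumes "\<And>n. d n = r n + (\<Sum>k\<le>n. t k * d (n - k))"
  shows "(\<Sum>k\<le>n. tail t k * d (n - k)) = (\<Sum>j\<le>n. r j)"
proof -
  define D R T where "D = Abs_fps d" and "R = Abs_fps r" and "T = Abs_fps t"
  define S where "S = Abs_fps (\<lambda>n. \<Sum>j\<le>n. r j)"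
  have "D = R + T * D"
    by (intro fps_ext) (simp add: D_def R_def T_def fps_nth_mult_Abs_fps assms[symmetric])
  then have "D - T * D = R"
    by (metis add_diff_cancel_right')
  then have DT: "D * (1 - T) = R"
    by (simp add: algebra_simps)
  have S: "(1 - fps_X) * S = R"
  proof (rule fps_ext)
    show "fps_nth ((1 - fps_X) * S) n = fps_nth R n" for n
      by (cases n) (simp_all add: S_def R_def algebra_simps)
  qed
  have "(1 - fps_X) * (Abs_fps (tail t) * D) = D * ((1 - fps_X) * Abs_fps (tail t))"
    by (simp only: ac_simps)
  also have "\<dots> = (1 - fps_X) * S"
    by (simp only: fps_tail[of t, folded T_def] DT S)
  finally have "(1 - fps_X) * (Abs_fps (tail t) * D) = (1 - fps_X) * S" .
  then have "Abs_fps (tail t) * D = S"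
    by (simp add: fps_X_neq_one[symmetric])
  then show ?thesis
    by (metis D_def S_def fps_nth_Abs_fps fps_nth_mult_Abs_fps)
qed

section \<open>A discrete renewal theorem\<close>

lemma filterlim_minus_const_nat_at_top:
  fixes m :: "'a \<Rightarrow> nat"
  assumes "filterlim m at_top F"
  shows "filterlim (\<lambda>i. m i - k) at_top F"
  unfolding filterlim_at_top
proof
  fix z
  have "eventually (\<lambda>i. z + k \<le> m i) F"
    using assms unfolding filterlim_at_top by blast
  then show "eventually (\<lambda>i. z \<le> m i - k) F"
    by eventually_elim auto
qed

lemma eventually_convolution_le:
  fixes w d :: "nat \<Rightarrow> real"
  assumes w: "\<And>k. 0 \<le> w k" "w sums W" and bounded: "\<And>n. \<bar>d n\<bar> \<le> B"
    and "eventually (\<lambda>n. d n \<le> c) sequentially" and "0 < \<delta>"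
  shows "eventually (\<lambda>n. (\<Sum>k\<le>n. w k * d (n - k)) \<le> W * c + \<delta>) sequentially"
proof -
  have "0 \<le> B"
    using bounded[of 0] by linarith
  have partial_le: "(\<Sum>k\<in>A. w k) \<le> W" if "finite A" for A
    using sum_le_suminf[OF sums_summable[OF w(2)] that] w by (simp add: sums_unique[symmetric])
  have "eventually (\<lambda>K. W - \<delta> / (\<bar>c\<bar> + B + 1) < (\<Sum>k\<le>K. w k)) sequentially"
    using w(2) \<open>0 \<le> B\<close> \<open>0 < \<delta>\<close> unfolding sums_def_le by (intro order_tendstoD(1)) auto
  then obtain K where K: "W - \<delta> / (\<bar>c\<bar> + B + 1) < (\<Sum>k\<le>K. w k)"
    by (meson eventually_sequentially order_refl)
  define \<tau> where "\<tau> = W - (\<Sum>k\<le>K. w k)"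
  have "0 \<le> \<tau>"
    using partial_le[of "{..K}"] by (simp add: \<tau>_def)
  have small: "(\<bar>c\<bar> + B) * \<tau> \<le> \<delta>"
  proof -
    have "(\<bar>c\<bar> + B) * \<tau> \<le> (\<bar>c\<bar> + B + 1) * \<tau>"
      using \<open>0 \<le> \<tau>\<close> by (simp add: algebra_simps)
    also have "\<dots> \<le> \<delta>"
      using K \<open>0 \<le> B\<close> by (simp add: \<tau>_def field_simps)
    finally show ?thesis .
  qed
  obtain N where N: "\<And>n. N \<le> n \<Longrightarrow> d n \<le> c"
    using assms(4) by (auto simp: eventually_sequentially)
  show ?thesis
  proof (rule eventually_sequentiallyI[of "N + K"])
    fix n assume n: "N + K \<le> n"
    have split: "{..n} = {..K} \<union> {K<..n}" "{..K} \<inter> {K<..n} = {}"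
      using n by auto
    have "(\<Sum>k\<le>K. w k * d (n - k)) \<le> (\<Sum>k\<le>K. w k * c)"
      using n N w(1) by (intro sum_mono mult_left_mono) auto
    also have "\<dots> = W * c - c * \<tau>"
      by (simp add: \<tau>_def algebra_simps flip: sum_distrib_left sum_distrib_right)
    also have "\<dots> \<le> W * c + \<bar>c\<bar> * \<tau>"
      using \<open>0 \<le> \<tau>\<close> mult_right_mono[OF abs_ge_minus_self[of c] \<open>0 \<le> \<tau>\<close>] by simp
    finally have head: "(\<Sum>k\<le>K. w k * d (n - k)) \<le> W * c + \<bar>c\<bar> * \<tau>" .
    have "(\<Sum>k\<in>{K<..n}. w k * d (n - k)) \<le> (\<Sum>k\<in>{K<..n}. w k * B)"
      using w(1) bounded abs_le_D1 by (intro sum_mono mult_left_mono) auto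
    also have "\<dots> = B * ((\<Sum>k\<le>n. w k) - (\<Sum>k\<le>K. w k))"
      by (simp add: split sum.union_disjoint algebra_simps flip: sum_distrib_left sum_distrib_right)
    also have "\<dots> \<le> B * \<tau>"
      using partial_le[of "{..n}"] \<open>0 \<le> B\<close> by (intro mult_left_mono) (auto simp: \<tau>_def)
    finally have rest: "(\<Sum>k\<in>{K<..n}. w k * d (n - k)) \<le> B * \<tau>" .
    have "(\<Sum>k\<le>n. w k * d (n - k)) = (\<Sum>k\<le>K. w k * d (n - k)) + (\<Sum>k\<in>{K<..n}. w k * d (n - k))"
      by (simp add: split sum.union_disjoint)
    with head rest small show "(\<Sum>k\<le>n. w k * d (n - k)) \<le> W * c + \<delta>"
      by (simp add: algebra_simps)
  qed
qed

lemma limsup_attained: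
  fixes d :: "nat \<Rightarrow> real"
  assumes "\<And>n. \<bar>d n\<bar> \<le> B"
  obtains l m where "strict_mono m" "(\<lambda>i. d (m i)) \<longlonglongrightarrow> l"
    and "\<And>\<epsilon>. 0 < \<epsilon> \<Longrightarrow> eventually (\<lambda>n. d n < l + \<epsilon>) sequentially"
proof -
  define L where "L = limsup (\<lambda>n. ereal (d n))"
  obtain m :: "nat \<Rightarrow> nat" where m: "strict_mono m" "(\<lambda>i. ereal (d (m i))) \<longlonglongrightarrow> L"
    using limsup_subseq_lim[of "\<lambda>n. ereal (d n)"] by (auto simp: L_def o_def)
  have "L \<le> ereal B"
    by (rule LIMSEQ_le_const2[OF m(2)]) (use assms in \<open>force simp: abs_le_iff\<close>)
  moreover have "ereal (- B) \<le> L"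
    by (rule LIMSEQ_le_const[OF m(2)]) (metis abs_le_iff assms ereal_less_eq(3) minus_le_iff)
  ultimately obtain l where l: "L = ereal l"
    by (cases L) auto
  show ?thesis
  proof
    show "strict_mono m" by fact
    show "(\<lambda>i. d (m i)) \<longlonglongrightarrow> l"
      using m(2) by (simp add: l)
    show "eventually (\<lambda>n. d n < l + \<epsilon>) sequentially" if "0 < \<epsilon>" for \<epsilon>
    proof -
      have "limsup (\<lambda>n. ereal (d n)) < ereal (l + \<epsilon>)"
        using that by (simp add: L_def[symmetric] l)
      from Limsup_lessD[OF this] show ?thesis
        by eventually_elim simp
    qed
  qed
qed

lemma renewal_limit_point_shift:
  fixes d r t :: "nat \<Rightarrow> real" and m :: "nat \<Rightarrow> nat"
  assumes renewal: "\<And>n. d n = r n + (\<Sum>k\<le>n. t k * d (n - k))" and "r \<longlonglongrightarrow> 0"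
    and t: "\<And>k. 0 \<le> t k" "t sums 1" "0 < t 1" and bounded: "\<And>n. \<bar>d n\<bar> \<le> B"
    and upper: "\<And>\<epsilon>. 0 < \<epsilon> \<Longrightarrow> eventually (\<lambda>n. d n < l + \<epsilon>) sequentially"
    and m: "filterlim m at_top sequentially" and lim: "(\<lambda>i. d (m i)) \<longlonglongrightarrow> l"
  shows "(\<lambda>i. d (m i - 1)) \<longlonglongrightarrow> l"
proof (rule order_tendstoI)
  fix a assume "l < a"
  with upper[of "a - l"] have "eventually (\<lambda>n. d n < a) sequentially"
    by simp
  from eventually_compose_filterlim[OF this filterlim_minus_const_nat_at_top[OF m]]
  show "eventually (\<lambda>i. d (m i - 1) < a) sequentially" .
next
  fix a assume "a < l"
  define w where "w k = t k - (if k = 1 then t k else 0)" for k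
  have w: "\<And>k. 0 \<le> w k" "w sums (1 - t 1)"
    using t(1) sums_diff[OF t(2) sums_single[of 1 t]] by (simp_all add: w_def[abs_def])
  have split: "d n = r n + t 1 * d (n - 1) + (\<Sum>k\<le>n. w k * d (n - k))" if "1 \<le> n" for n
  proof -
    have "(\<Sum>k\<le>n. t k * d (n - k))
        = (\<Sum>k\<le>n. (if k = 1 then t 1 * d (n - 1) else 0) + w k * d (n - k))"
      by (rule sum.cong) (simp_all add: w_def)
    also have "\<dots> = t 1 * d (n - 1) + (\<Sum>k\<le>n. w k * d (n - k))"
      using that by (simp add: sum.distrib)
    finally show ?thesis
      using renewal[of n] by linarith
  qed
  define \<delta> where "\<delta> = t 1 * (l - a) / 4"
  have "0 < \<delta>"
    using \<open>a < l\<close> t(3) by (simp add: \<delta>_def)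
  have "eventually (\<lambda>n. d n \<le> l + \<delta>) sequentially"
    using upper[OF \<open>0 < \<delta>\<close>] by eventually_elim simp
  from eventually_convolution_le[OF w bounded this \<open>0 < \<delta>\<close>]
  have conv: "eventually (\<lambda>i.
      (\<Sum>k\<le>m i. w k * d (m i - k)) \<le> (1 - t 1) * (l + \<delta>) + \<delta>) sequentially"
    by (rule eventually_compose_filterlim[OF _ m])
  have "eventually (\<lambda>i. l - \<delta> < d (m i)) sequentially"
    using lim \<open>0 < \<delta>\<close> by (intro order_tendstoD(1)) auto
  moreover have "eventually (\<lambda>i. r (m i) < \<delta>) sequentially"
    using filterlim_compose[OF \<open>r \<longlonglongrightarrow> 0\<close> m] \<open>0 < \<delta>\<close> by (intro order_tendstoD(2)) auto
  moreover have "eventually (\<lambda>i. 1 \<le> m i) sequentially"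
    using m by (simp add: filterlim_at_top)
  ultimately show "eventually (\<lambda>i. a < d (m i - 1)) sequentially"
    using conv
  proof eventually_elim
    case (elim i)
    have "(1 - t 1) * (l + \<delta>) = l - t 1 * l + \<delta> - t 1 * \<delta>"
      by (simp add: algebra_simps)
    moreover have "t 1 * a = t 1 * l - 4 * \<delta>"
      by (simp add: \<delta>_def field_simps)
    moreover have "0 \<le> t 1 * \<delta>"
      using t(3) \<open>0 < \<delta>\<close> by simp
    (* t 1 * d (m i - 1) = d (m i) - r (m i) - (sum)
         > (l - \<delta>) - \<delta> - ((1 - t 1) * (l + \<delta>) + \<delta>) \<ge> t 1 * l - 4 * \<delta> *)
    ultimately have "t 1 * a < t 1 * d (m i - 1)"
      using elim split[OF elim(3)] by linarith
    then show ?case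
      using t(3) by simp
  qed
qed

lemma renewal_limsup_shifts:
  fixes d r t :: "nat \<Rightarrow> real"
  assumes renewal: "\<And>n. d n = r n + (\<Sum>k\<le>n. t k * d (n - k))" and "r \<longlonglongrightarrow> 0"
    and t: "\<And>k. 0 \<le> t k" "t sums 1" "0 < t 1" and bounded: "\<And>n. \<bar>d n\<bar> \<le> B"
  obtains m l where "filterlim m at_top sequentially" "\<And>j. (\<lambda>i. d (m i - j)) \<longlonglongrightarrow> l"
    and "\<And>\<epsilon>. 0 < \<epsilon> \<Longrightarrow> eventually (\<lambda>n. d n < l + \<epsilon>) sequentially"
proof -
  obtain l m where m: "strict_mono m" "(\<lambda>i. d (m i)) \<longlonglongrightarrow> l"
    and upper: "\<And>\<epsilon>. 0 < \<epsilon> \<Longrightarrow> eventually (\<lambda>n. d n < l + \<epsilon>) sequentially"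
    using limsup_attained[of d B, OF bounded] by blast
  have m_at_top: "filterlim m at_top sequentially"
    using filterlim_subseq[OF m(1)] .
  have shifts: "(\<lambda>i. d (m i - j)) \<longlonglongrightarrow> l" for j
  proof (induction j)
    case 0
    then show ?case using m(2) by simp
  next
    case (Suc j)
    from renewal_limit_point_shift[OF renewal \<open>r \<longlonglongrightarrow> 0\<close> t bounded upper
        filterlim_minus_const_nat_at_top[OF m_at_top] Suc.IH]
    show ?case by simp
  qed
  show ?thesis
    by (rule that[OF m_at_top shifts upper])
qed

lemma tendsto_convolution_shifts:
  fixes u d :: "nat \<Rightarrow> real" and m :: "nat \<Rightarrow> nat"
  assumes u: "\<And>k. 0 \<le> u k" "u sums \<mu>" and bounded: "\<And>n. \<bar>d n\<bar> \<le> B"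
    and m: "filterlim m at_top sequentially" and lim: "\<And>k. (\<lambda>i. d (m i - k)) \<longlonglongrightarrow> l"
  shows "(\<lambda>i. \<Sum>k\<le>m i. u k * d (m i - k)) \<longlonglongrightarrow> \<mu> * l"
proof -
  have "0 \<le> B"
    using bounded[of 0] by linarith
  define a where "a k i = (if k \<le> m i then u k * d (m i - k) else 0)" for k i
  have "(\<lambda>i. a k i) \<longlonglongrightarrow> u k * l" for k
  proof (rule Lim_transform_eventually)
    show "(\<lambda>i. u k * d (m i - k)) \<longlonglongrightarrow> u k * l"
      by (intro tendsto_mult tendsto_const lim)
    have "eventually (\<lambda>i. k \<le> m i) sequentially"
      using m by (simp add: filterlim_at_top)
    then show "eventually (\<lambda>i. u k * d (m i - k) = a k i) sequentially"
      by eventually_elim (simp add: a_def)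
  qed
  moreover have "norm (a k i) \<le> B * u k" for k i
    using mult_left_mono[OF bounded[of "m i - k"] u(1)[of k]] u(1)[of k] \<open>0 \<le> B\<close>
    by (simp add: a_def abs_mult mult.commute)
  moreover have "summable (\<lambda>k. B * u k)"
    using u(2) by (intro summable_mult sums_summable)
  ultimately have "(\<lambda>i. \<Sum>k. a k i) \<longlonglongrightarrow> (\<Sum>k. u k * l)"
    using tannerys_theorem[of a "\<lambda>k. u k * l" sequentially "\<lambda>k. B * u k"] by (simp add: always_eventually)
  moreover have "(\<Sum>k. a k i) = (\<Sum>k\<le>m i. u k * d (m i - k))" for i
    by (subst suminf_finite[of "{..m i}"]) (auto simp: a_def)
  moreover have "(\<Sum>k. u k * l) = \<mu> * l"
    using sums_unique[OF sums_mult2[OF u(2)]] by simp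
  ultimately show ?thesis
    by simp
qed

lemma renewal_nonneg:
  fixes d r t :: "nat \<Rightarrow> real"
  assumes renewal: "\<And>n. d n = r n + (\<Sum>k\<le>n. t k * d (n - k))"
    and "\<And>k. 0 \<le> t k" "t 0 < 1" "\<And>n. 0 \<le> r n"
  shows "0 \<le> d n"
proof (induction n rule: less_induct)
  case (less n)
  have "(\<Sum>k\<le>n. t k * d (n - k)) = t 0 * d n + (\<Sum>k\<in>{1..n}. t k * d (n - k))"
    by (simp add: atMost_atLeast0 sum.atLeast_Suc_atMost)
  moreover have "0 \<le> (\<Sum>k\<in>{1..n}. t k * d (n - k))"
    using assms(2) less.IH by (intro sum_nonneg mult_nonneg_nonneg) auto
  moreover have "(1 - t 0) * d n = d n - t 0 * d n"
    by (simp add: algebra_simps)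
  ultimately have "0 \<le> (1 - t 0) * d n"
    using renewal[of n] assms(4)[of n] by linarith
  with \<open>t 0 < 1\<close> show ?case
    by (simp add: zero_le_mult_iff)
qed

lemma renewal_bounded:
  fixes d r t :: "nat \<Rightarrow> real"
  assumes renewal: "\<And>n. d n = r n + (\<Sum>k\<le>n. t k * d (n - k))"
    and t: "\<And>k. 0 \<le> t k" "t sums 1" "0 < t 1" and r: "\<And>n. 0 \<le> r n" "r sums \<rho>"
  shows "\<bar>d n\<bar> \<le> \<rho> / tail t 0"
proof -
  have "0 < tail t 0"
    by (rule tail_0_pos[OF t])
  then have "t 0 < 1"
    by (simp add: tail_def)
  have nonneg: "0 \<le> d k" for k
    by (rule renewal_nonneg[OF renewal t(1) \<open>t 0 < 1\<close> r(1)])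
  have "tail t 0 * d n \<le> (\<Sum>k\<le>n. tail t k * d (n - k))"
    using member_le_sum[of 0 "{..n}" "\<lambda>k. tail t k * d (n - k)"] tail_nonneg[OF t(1,2)] nonneg
    by simp
  also have "\<dots> = (\<Sum>j\<le>n. r j)"
    by (rule tail_convolution_eq_partial_sums[OF renewal])
  also have "\<dots> \<le> \<rho>"
    using sum_le_suminf[OF sums_summable[OF r(2)], of "{..n}"] r(1)
    by (simp add: sums_unique[OF r(2), symmetric])
  finally show ?thesis
    using nonneg[of n] \<open>0 < tail t 0\<close> by (simp add: field_simps)
qed

lemma renewal_limit_point:
  fixes d r t :: "nat \<Rightarrow> real" and m :: "nat \<Rightarrow> nat"
  assumes renewal: "\<And>n. d n = r n + (\<Sum>k\<le>n. t k * d (n - k))"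
    and t: "\<And>k. 0 \<le> t k" "t sums 1" and mean: "tail t sums \<mu>" "0 < \<mu>" and "r sums \<rho>"
    and bounded: "\<And>n. \<bar>d n\<bar> \<le> B"
    and m: "filterlim m at_top sequentially" and lim: "\<And>j. (\<lambda>i. d (m i - j)) \<longlonglongrightarrow> l"
  shows "l = \<rho> / \<mu>"
proof -
  have "(\<lambda>i. \<Sum>k\<le>m i. tail t k * d (m i - k)) \<longlonglongrightarrow> \<mu> * l"
    by (rule tendsto_convolution_shifts[OF tail_nonneg[OF t] mean(1) bounded m lim])
  then have "(\<lambda>i. \<Sum>j\<le>m i. r j) \<longlonglongrightarrow> \<mu> * l"
    by (simp add: tail_convolution_eq_partial_sums[OF renewal])
  moreover have "(\<lambda>i. \<Sum>j\<le>m i. r j) \<longlonglongrightarrow> \<rho>"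
    using filterlim_compose[OF \<open>r sums \<rho>\<close>[unfolded sums_def_le] m] .
  ultimately have "\<mu> * l = \<rho>"
    using LIMSEQ_unique by blast
  with \<open>0 < \<mu>\<close> show ?thesis
    by (simp add: field_simps)
qed

theorem renewal_theorem:
  fixes d r t :: "nat \<Rightarrow> real"
  assumes renewal: "\<And>n. d n = r n + (\<Sum>k\<le>n. t k * d (n - k))"
    and t: "\<And>k. 0 \<le> t k" "t sums 1" "0 < t 1" and mean: "tail t sums \<mu>"
    and r: "\<And>n. 0 \<le> r n" "r sums \<rho>"
  shows "d \<longlonglongrightarrow> \<rho> / \<mu>"
proof -
  have "0 < \<mu>"
    using sum_le_suminf[OF sums_summable[OF mean], of "{0}"] tail_nonneg[OF t(1,2)] tail_0_pos[OF t]
    by (simp add: sums_unique[OF mean, symmetric])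
  note bounded = renewal_bounded[OF renewal t r]
  have "r \<longlonglongrightarrow> 0"
    using summable_LIMSEQ_zero[OF sums_summable[OF r(2)]] .
  obtain m l where m: "filterlim m at_top sequentially"
    and lim: "\<And>j. (\<lambda>i. d (m i - j)) \<longlonglongrightarrow> l"
    and upper: "\<And>\<epsilon>. 0 < \<epsilon> \<Longrightarrow> eventually (\<lambda>n. d n < l + \<epsilon>) sequentially"
    using renewal_limsup_shifts[OF renewal \<open>r \<longlonglongrightarrow> 0\<close> t bounded] by blast
  have "l = \<rho> / \<mu>"
    by (rule renewal_limit_point[OF renewal t(1,2) mean \<open>0 < \<mu>\<close> r(2) bounded m lim])
  have renewal_neg: "- d n = - r n + (\<Sum>k\<le>n. t k * - d (n - k))" for n
    by (subst renewal) (simp add: sum_negf)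
  have bounded_neg: "\<bar>- d n\<bar> \<le> \<rho> / tail t 0" for n
    using bounded[of n] by simp
  obtain m' l' where m': "filterlim m' at_top sequentially"
    and lim': "\<And>j. (\<lambda>i. - d (m' i - j)) \<longlonglongrightarrow> l'"
    and lower: "\<And>\<epsilon>. 0 < \<epsilon> \<Longrightarrow> eventually (\<lambda>n. - d n < l' + \<epsilon>) sequentially"
    using renewal_limsup_shifts[OF renewal_neg tendsto_minus[OF \<open>r \<longlonglongrightarrow> 0\<close>, simplified]
        t bounded_neg]
    by blast
  have "- l' = \<rho> / \<mu>"
    using lim' by (intro renewal_limit_point[OF renewal t(1,2) mean \<open>0 < \<mu>\<close> r(2) bounded m'])
      (simp add: tendsto_minus_cancel_left)
  show ?thesis
  proof (rule order_tendstoI)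
    show "eventually (\<lambda>n. d n < a) sequentially" if "\<rho> / \<mu> < a" for a
      using upper[of "a - l"] that \<open>l = \<rho> / \<mu>\<close> by simp
    show "eventually (\<lambda>n. a < d n) sequentially" if "a < \<rho> / \<mu>" for a
    proof -
      have "eventually (\<lambda>n. - d n < l' + (\<rho> / \<mu> - a)) sequentially"
        using lower that by simp
      then show ?thesis
        by eventually_elim (use \<open>- l' = \<rho> / \<mu>\<close> in linarith)
    qed
  qed
qed

section \<open>Mixed Poisson arrivals and the busy period\<close>

lemma poisson_binomial_moment:
  fixes y :: real
  shows "(\<lambda>j. real (j choose m) * (exp (- y) * y ^ j / fact j)) sums (y ^ m / fact m)"
proof -
  have "(\<lambda>i. y ^ i / fact i) sums exp y"
    using exp_converges[of y] by (simp add: divide_inverse mult.commute)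
  from sums_mult[OF this, of "exp (- y) * y ^ m / fact m"]
  have "(\<lambda>i. exp (- y) * y ^ m / fact m * (y ^ i / fact i)) sums (y ^ m / fact m)"
    by (simp add: exp_minus field_simps)
  moreover have "real ((i + m) choose m) * (exp (- y) * y ^ (i + m) / fact (i + m))
      = exp (- y) * y ^ m / fact m * (y ^ i / fact i)" for i
    by (simp add: binomial_fact power_add field_simps)
  ultimately have "(\<lambda>i. real ((i + m) choose m) * (exp (- y) * y ^ (i + m) / fact (i + m))) sums (y ^ m / fact m)"
    by simp
  then show ?thesis
    by (subst sums_zero_iff_shift[of m, symmetric]) simp_all
qed

lemma sums_integral_nonneg:
  fixes f :: "nat \<Rightarrow> 'a \<Rightarrow> real"
  assumes f: "\<And>i. f i \<in> borel_measurable M" and nonneg: "AE x in M. \<forall>i. 0 \<le> f i x"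
    and sums: "AE x in M. (\<lambda>i. f i x) sums g x" and g: "integrable M g"
  shows "(\<lambda>i. integral\<^sup>L M (f i)) sums integral\<^sup>L M g"
proof -
  have bound: "AE x in M. \<forall>I. finite I \<longrightarrow> \<bar>\<Sum>i\<in>I. f i x\<bar> \<le> g x"
    using nonneg sums
  proof eventually_elim
    case (elim x)
    show ?case
      using sum_le_suminf[OF sums_summable[OF elim(2)]] sums_unique[OF elim(2)] elim(1)
      by (simp add: sum_nonneg)
  qed
  have integrable: "integrable M (f i)" for i
    using bound by (intro Bochner_Integration.integrable_bound[OF g f])
      (auto elim!: eventually_mono dest: spec[of _ "{i}"])
  have "(\<lambda>n. \<integral>x. (\<Sum>i<n. f i x) \<partial>M) \<longlonglongrightarrow> integral\<^sup>L M g"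
  proof (rule integral_dominated_convergence[where w = g])
    show "AE x in M. (\<lambda>n. \<Sum>i<n. f i x) \<longlonglongrightarrow> g x"
      using sums by eventually_elim (simp add: sums_def)
    show "AE x in M. norm (\<Sum>i<n. f i x) \<le> g x" for n
      using bound by eventually_elim simp
  qed (use f g in auto)
  then show ?thesis
    using integrable by (simp add: sums_def)
qed

lemma fps_busy_period:
  fixes e r :: "nat \<Rightarrow> real"
  assumes "e 0 = 1" and busy: "\<And>n. e n = (\<Sum>j\<le>n. e (n - j + 1) * r j)"
  shows "fps_X * Abs_fps e = Abs_fps r * (Abs_fps e - 1)"
proof (rule fps_ext)
  have shifted: "Abs_fps e - 1 = Abs_fps (\<lambda>k. e k - (if k = 0 then 1 else 0))"
    by (rule fps_ext) simp
  show "fps_nth (fps_X * Abs_fps e) n = fps_nth (Abs_fps r * (Abs_fps e - 1)) n" for n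
  proof (cases n)
    case 0
    then show ?thesis
      by (simp add: fps_mult_nth \<open>e 0 = 1\<close>)
  next
    case (Suc m)
    have "fps_nth (Abs_fps r * (Abs_fps e - 1)) n
        = (\<Sum>j\<le>Suc m. r j * (e (Suc m - j) - (if Suc m - j = 0 then 1 else 0)))"
      by (simp add: Suc shifted fps_nth_mult_Abs_fps)
    also have "\<dots> = (\<Sum>j\<le>m. r j * e (Suc m - j))"
      by (simp add: \<open>e 0 = 1\<close>)
    also have "\<dots> = (\<Sum>j\<le>m. e (m - j + 1) * r j)"
      by (intro sum.cong) (simp_all add: Suc_diff_le mult.commute)
    finally show ?thesis
      using busy[of m] by (simp add: Suc)
  qed
qed

lemma busy_period_renewal_equation:
  fixes e r :: "nat \<Rightarrow> real"
  assumes "e 0 = 1" and "\<And>n. e n = (\<Sum>j\<le>n. e (n - j + 1) * r j)"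
  defines "d \<equiv> fps_nth ((1 - fps_X) * Abs_fps e)"
  shows "d n = r n + (\<Sum>k\<le>n. tail r k * d (n - k))"
proof -
  define E R T where "E = Abs_fps e" and "R = Abs_fps r" and "T = Abs_fps (tail r)"
  define D where "D = (1 - fps_X) * E"
  have "D * (1 - T) = E * ((1 - fps_X) - (1 - fps_X) * T)"
    by (simp add: D_def algebra_simps)
  also have "\<dots> = R * E - fps_X * E"
    unfolding fps_tail[of r, folded T_def R_def] by (simp add: algebra_simps)
  also have "\<dots> = R * E - R * (E - 1)"
    by (simp only: fps_busy_period[OF assms(1,2), folded E_def R_def])
  also have "\<dots> = R"
    by (simp add: algebra_simps)
  finally have DT: "D * (1 - T) = R" .
  have "D = R + T * D"
    by (simp add: algebra_simps flip: DT)
  then have "fps_nth D n = fps_nth (R + T * D) n"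
    by simp
  moreover have "d = fps_nth D"
    by (simp add: d_def D_def E_def)
  ultimately show ?thesis
    by (simp add: R_def T_def fps_mult_nth atLeast0AtMost)
qed

locale mixed_poisson = prob_space M for M :: "real measure" +
  fixes lam :: real
  assumes sets_eq_borel: "sets M = sets borel"
    and AE_nonneg: "AE x in M. 0 \<le> x"
    and lam_nonneg: "0 \<le> lam"
begin

lemma rj_binomial_moment:
  assumes "integrable M (\<lambda>x. x ^ m)"
  shows "(\<lambda>j. real (j choose m) * rj M lam j) sums (lam ^ m * (\<integral>x. x ^ m \<partial>M) / fact m)"
proof -
  define p where "p j x = exp (- lam * x) * (lam * x) ^ j / fact j" for j x
  have "(\<lambda>j. \<integral>x. real (j choose m) * p j x \<partial>M) sums (\<integral>x. (lam * x) ^ m / fact m \<partial>M)"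
  proof (rule sums_integral_nonneg)
    show "(\<lambda>x. real (j choose m) * p j x) \<in> borel_measurable M" for j
      unfolding measurable_cong_sets[OF sets_eq_borel refl] p_def by measurable
    show "AE x in M. \<forall>j. 0 \<le> real (j choose m) * p j x"
      using AE_nonneg by eventually_elim (simp add: p_def lam_nonneg)
    show "AE x in M. (\<lambda>j. real (j choose m) * p j x) sums ((lam * x) ^ m / fact m)"
      using poisson_binomial_moment[of m "lam * _"] by (simp add: p_def)
    show "integrable M (\<lambda>x. (lam * x) ^ m / fact m)"
      using assms by (simp add: power_mult_distrib)
  qed
  then show ?thesis
    by (simp add: rj_def p_def power_mult_distrib)
qed

lemma rj_nonneg: "0 \<le> rj M lam j"
  unfolding rj_def using AE_nonneg lam_nonneg
  by (intro integral_nonneg_AE) (auto elim!: eventually_mono)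

lemma rj_sums: "rj M lam sums 1"
  using rj_binomial_moment[of 0] by (simp add: prob_space)

lemma rj_mean: "integrable M (\<lambda>x. x) \<Longrightarrow> (\<lambda>j. real j * rj M lam j) sums rho1 M lam"
  using rj_binomial_moment[of 1] by (simp add: rho1_def)

lemma rj_second_binomial_moment:
  "integrable M (\<lambda>x. x ^ 2) \<Longrightarrow> (\<lambda>j. real (j choose 2) * rj M lam j) sums (rho12 M lam / 2)"
  using rj_binomial_moment[of 2] by (simp add: rho12_def)

lemma rj_0_pos: "0 < rj M lam 0"
proof -
  have "integrable M (\<lambda>x. exp (- lam * x))"
    using AE_nonneg lam_nonneg
    by (intro integrable_const_bound[where B = 1])
       (auto simp: measurable_cong_sets[OF sets_eq_borel refl] elim!: eventually_mono)
  moreover have "\<not> (AE x in M. exp (- lam * x) = 0)"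
    using AE_False by simp
  moreover have "0 \<le> (\<integral>x. exp (- lam * x) \<partial>M)"
    by (rule integral_nonneg_AE) simp
  ultimately show ?thesis
    using integral_nonneg_eq_0_iff_AE[of M "\<lambda>x. exp (- lam * x)"]
    by (simp add: rj_def less_le)
qed

lemma busy_period_increments_tendsto:
  fixes e :: "nat \<Rightarrow> real"
  assumes "integrable M (\<lambda>x. x)" and "rho1 M lam = 1" and "integrable M (\<lambda>x. x ^ 2)"
    and "e 0 = 1" and "\<And>n. e n = (\<Sum>j\<le>n. e (n - j + 1) * rj M lam j)"
  shows "fps_nth ((1 - fps_X) * Abs_fps e) \<longlonglongrightarrow> 2 / rho12 M lam"
proof -
  define r where "r = rj M lam"
  have r: "\<And>j. 0 \<le> r j" "r sums 1" and r_mean: "(\<lambda>j. real j * r j) sums 1"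
    using rj_nonneg rj_sums rj_mean[OF assms(1)] assms(2) by (simp_all add: r_def)
  have t: "\<And>k. 0 \<le> tail r k" "tail r sums 1" "0 < tail r 1"
    using tail_nonneg[OF r] tail_sums_mean[OF r r_mean] tail_1_pos[OF r r_mean] rj_0_pos
    by (simp_all add: r_def)
  have "(\<lambda>k. real k * tail r k) sums (rho12 M lam / 2)"
    using binomial_moment_tail[OF r, of 1] rj_second_binomial_moment[OF assms(3)]
    by (simp add: r_def numeral_2_eq_2)
  then have mean: "tail (tail r) sums (rho12 M lam / 2)"
    by (rule tail_sums_mean[OF t(1,2)])
  from renewal_theorem[OF busy_period_renewal_equation[OF assms(4,5)],
      OF t[unfolded r_def] mean[unfolded r_def] r[unfolded r_def]]
  show ?thesis
    by simp
qed

end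

theorem corollary1:
  fixes M :: "real measure" and lam :: real and e :: "nat \<Rightarrow> real"
  assumes "prob_space M"
    and "sets M = sets borel"
    and "AE x in M. x \<ge> 0"
    and "integrable M (\<lambda>x. x)"
    and "(\<integral>x. x \<partial>M) > 0"
    and "lam > 0"
    and "e 0 = 1"
    and "\<And>n. e n = (\<Sum>j\<le>n. e (n - j + 1) * rj M lam j)"
    and "rho1 M lam = 1"
    and "integrable M (\<lambda>x. x ^ 2)"
  shows "\<forall>j::nat. ((\<lambda>L. e (L - j) - e (L - j - 1)) \<longlongrightarrow> 2 / rho12 M lam) sequentially"
proof -
  interpret mixed_poisson M lam
    using assms(1-3,6) by (intro mixed_poisson.intro mixed_poisson_axioms.intro) auto
  (* d 0 = e 0, whereas e 0 - e (0 - 1) = 0 by truncated subtraction. *)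
  define d where "d = fps_nth ((1 - fps_X) * Abs_fps e)"
  have d_lim: "d \<longlonglongrightarrow> 2 / rho12 M lam"
    unfolding d_def using assms(4,9,10,7,8) by (rule busy_period_increments_tendsto)
  have increment: "d n = e n - e (n - 1)" if "1 \<le> n" for n
    using that by (cases n) (simp_all add: d_def algebra_simps)
  show ?thesis
  proof
    fix j :: nat
    have "(\<lambda>L. d (L - j)) \<longlonglongrightarrow> 2 / rho12 M lam"
      using filterlim_compose[OF d_lim filterlim_minus_const_nat_at_top[OF filterlim_ident]] .
    moreover have "eventually (\<lambda>L. d (L - j) = e (L - j) - e (L - j - 1)) sequentially"
      using increment by (intro eventually_sequentiallyI[of "Suc j"]) simp
    ultimately show "((\<lambda>L. e (L - j) - e (L - j - 1)) \<longlongrightarrow> 2 / rho12 M lam) sequentially"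
      by (rule Lim_transform_eventually)
  qed
qed

end
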